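(* The monotone-regression risk at zero satisfies $r(1)=1$, $r(N)\le20(\log N)^2$ for all $N\ge10$, and $r(N)<2N[\log N+1]$ for all $N\ge1$.
   Context: $\mathcal M_N=\{x\in\mathbb R^N:x_{t+1}\ge x_t\ \text{for all }t=1,\dots,N-1\}$; $\eta^{mono}(y)=\arg\min_{x\in\mathcal M_N}\|y-x\|_2^2$; $r(N)=\mathbb E\|\eta^{mono}(\mathbf Z)\|_2^2$ with $\mathbf Z\sim\mathsf N(0,I_{N\times N})$; $\log$ is the natural logarithm. *)

theory Defs
  imports "HOL-Probability.Probability"
begin

text \<open>Vectors in R^N are represented as functions nat => real on the index set {0..<N}
  (coordinates t = 0..N-1 correspond to the paper's 1..N).\<close>

definition mono_cone :: "nat \<Rightarrow> (nat \<Rightarrow> real) set" where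
  "mono_cone N = {x. (\<forall>t. Suc t < N \<longrightarrow> x (Suc t) \<ge> x t) \<and> (\<forall>t\<ge>N. x t = 0)}"

definition sqdist :: "nat \<Rightarrow> (nat \<Rightarrow> real) \<Rightarrow> (nat \<Rightarrow> real) \<Rightarrow> real" where
  "sqdist N y x = (\<Sum>i<N. (y i - x i)^2)"

definition eta_mono :: "nat \<Rightarrow> (nat \<Rightarrow> real) \<Rightarrow> (nat \<Rightarrow> real)" where
  "eta_mono N y = (THE x. x \<in> mono_cone N \<and> (\<forall>z\<in>mono_cone N. sqdist N y x \<le> sqdist N y z))"

definition gauss :: "nat \<Rightarrow> (nat \<Rightarrow> real) measure" where
  "gauss N = PiM {..<N} (\<lambda>_. density lborel std_normal_density)"

definition risk :: "nat \<Rightarrow> real" where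
  "risk N = (\<integral>z. (\<Sum>i<N. (eta_mono N z i)^2) \<partial>gauss N)"

end

theory Submission
  imports Defs
begin

(*
  By first-order optimality the projection preserves the sum of y over
      every block of coordinates that can be shifted by a small constant within the cone.
      Hence each coordinate x_t lies between the average of y over some prefix {..u} with
      u >= t and the average of y over some suffix {s..<N} with s <= t.  Consequently, for
      every p >= 1, x_t^(2p) is at most the sum of the 2p-th powers of these block averages.

  A block average over J is N(0, 1/|J|), so its 2p-th moment is
      (2p-1)!! / |J|^p.  Combined with Young's inequality x^2 <= (1-1/p) c + x^(2p)/(p c^(p-1))
      this bounds risk N by an explicit sum, for any p >= 1 and any positive weights c_t.

  (3) Choice of parameters.  p = 1, c = 1 gives risk N <= 2N; p >= 2 with c_t chosen from
      power-sum estimates gives risk N <= 2 p^2 (2N)^(1/p), and p = floor(ln N) yields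
      risk N <= 20 (ln N)^2 for N >= 10.  Finally risk 1 = E z_0^2 = 1 is computed directly.
*)

section \<open>The standard Gaussian vector\<close>

lemma prob_space_gauss: "prob_space (gauss N)"
  unfolding gauss_def by (intro prob_space_PiM prob_space_normal_density) auto

lemma gauss_coordinate:
  assumes "i < N"
  shows "distributed (gauss N) lborel (\<lambda>z. z i) std_normal_density"
  unfolding distributed_def
proof (intro conjI)
  have "distr (gauss N) lborel (\<lambda>z. z i) = distr (gauss N) (density lborel std_normal_density) (\<lambda>z. z i)"
    by (rule distr_cong) auto
  also have "\<dots> = density lborel std_normal_density"
    unfolding gauss_def using assms by (intro distr_PiM_component prob_space_normal_density) auto
  finally show "distr (gauss N) lborel (\<lambda>z. z i) = density lborel std_normal_density" .
  show "(\<lambda>x. ennreal (std_normal_density x)) \<in> borel_measurable lborel" by simp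
  show "(\<lambda>z. z i) \<in> measurable (gauss N) lborel" unfolding gauss_def using assms
    by (simp add: measurable_component_singleton cong: measurable_cong_sets)
qed

lemma gauss_coordinates_indep: "prob_space.indep_vars (gauss N) (\<lambda>_. borel) (\<lambda>i z. z i) {..<N}"
proof (cases "N = 0")
  case True
  then show ?thesis
    by (simp add: prob_space.indep_vars_def prob_space_gauss prob_space.indep_sets_def)
next
  case False
  interpret prob_space "gauss N" by (rule prob_space_gauss)
  have marginal: "distr (gauss N) borel (\<lambda>z. z i) = density lborel std_normal_density" if "i < N" for i
  proof -
    have "distr (gauss N) borel (\<lambda>z. z i) = distr (gauss N) lborel (\<lambda>z. z i)"
      by (rule distr_cong) auto
    also have "\<dots> = density lborel std_normal_density"
      using gauss_coordinate[OF that] unfolding distributed_def by simp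
    finally show ?thesis .
  qed
  show ?thesis
  proof (subst indep_vars_iff_distr_eq_PiM')
    show "{..<N} \<noteq> {}" using False by auto
    show "random_variable borel (\<lambda>z. z i)" if "i \<in> {..<N}" for i
      using gauss_coordinate[of i N] that unfolding distributed_def by simp
    have "distr (gauss N) (\<Pi>\<^sub>M i\<in>{..<N}. borel) (\<lambda>x. \<lambda>i\<in>{..<N}. x i) = distr (gauss N) (gauss N) (\<lambda>x. x)"
      by (rule distr_cong) (auto simp: gauss_def space_PiM PiE_def extensional_def intro!: sets_PiM_cong)
    also have "\<dots> = (\<Pi>\<^sub>M i\<in>{..<N}. distr (gauss N) borel (\<lambda>z. z i))"
      unfolding distr_id gauss_def[of N] by (rule PiM_cong) (auto simp: marginal[unfolded gauss_def])
    finally show "distr (gauss N) (\<Pi>\<^sub>M i\<in>{..<N}. borel) (\<lambda>x. \<lambda>i\<in>{..<N}. x i)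
        = (\<Pi>\<^sub>M i\<in>{..<N}. distr (gauss N) borel (\<lambda>z. z i))" .
  qed
qed

lemma gauss_block_sum:
  assumes "J \<subseteq> {..<N}" "J \<noteq> {}"
  shows "distributed (gauss N) lborel (\<lambda>z. \<Sum>i\<in>J. z i) (normal_density 0 (sqrt (card J)))"
proof -
  interpret prob_space "gauss N" by (rule prob_space_gauss)
  have "finite J" using assms(1) finite_subset by blast
  then have "distributed (gauss N) lborel (\<lambda>x. \<Sum>i\<in>J. x i) (normal_density (\<Sum>i\<in>J. 0) (sqrt (\<Sum>i\<in>J. 1\<^sup>2)))"
    using assms
    by (intro sum_indep_normal[where X="\<lambda>i z. z i"] indep_vars_subset[OF gauss_coordinates_indep]
        gauss_coordinate) auto
  then show ?thesis by simp
qed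

text \<open>The even moments of a standard normal variable: E Z^(2k) = (2k)!/(2^k k!) = (2k-1)!!.\<close>

definition normal_moment :: "nat \<Rightarrow> real" where
  "normal_moment k = fact (2*k) / (2^k * fact k)"

definition block_avg :: "nat set \<Rightarrow> (nat \<Rightarrow> real) \<Rightarrow> real" where
  "block_avg J y = (\<Sum>i\<in>J. y i) / real (card J)"

text \<open>A block average over J is N(0, 1/|J|), hence its 2k-th moment is (2k-1)!!/|J|^k.\<close>

lemma block_avg_moment:
  assumes "J \<subseteq> {..<N}" "J \<noteq> {}"
  shows "integrable (gauss N) (\<lambda>z. block_avg J z ^ (2*k))"
    and "(\<integral>z. block_avg J z ^ (2*k) \<partial>gauss N) = normal_moment k / real (card J) ^ k"
proof -
  have "finite J" using assms(1) finite_subset by blast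
  then have card_pos: "0 < real (card J)" using assms(2) by auto
  note sum_law = gauss_block_sum[OF assms]
  have moment: "has_bochner_integral lborel (\<lambda>x. normal_density 0 (sqrt (card J)) x * (x - 0) ^ (2 * k))
     (fact (2 * k) / ((2 / (sqrt (card J))\<^sup>2)^k * fact k))"
    using card_pos by (intro normal_moment_even) simp
  have avg_pow: "block_avg J z ^ (2*k) = (\<Sum>i\<in>J. z i)^(2*k) / real (card J) ^ (2*k)" for z
    unfolding block_avg_def by (simp add: power_divide)
  have "integrable (gauss N) (\<lambda>z. (\<Sum>i\<in>J. z i)^(2*k))"
    using distributed_integrable[OF sum_law, of "\<lambda>x. x^(2*k)"] moment
    by (auto intro: has_bochner_integral.intros integrable.intros)
  then show "integrable (gauss N) (\<lambda>z. block_avg J z ^ (2*k))"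
    unfolding avg_pow by simp
  have "(\<integral>z. (\<Sum>i\<in>J. z i)^(2*k) \<partial>gauss N) = (\<integral>x. normal_density 0 (sqrt (card J)) x * x^(2*k) \<partial>lborel)"
    by (rule distributed_integral[OF sum_law, symmetric]) auto
  also have "\<dots> = normal_moment k * real (card J) ^ k"
    using has_bochner_integral_integral_eq[OF moment] card_pos
    by (simp add: normal_moment_def field_simps)
  finally show "(\<integral>z. block_avg J z ^ (2*k) \<partial>gauss N) = normal_moment k / real (card J) ^ k"
    unfolding avg_pow using card_pos by (simp add: mult_2 power_add)
qed

section \<open>The projection onto the monotone cone\<close>

lemma continuous_on_coordinate[continuous_intros]: "continuous_on S (\<lambda>x::nat\<Rightarrow>real. x i)"
  by (rule continuous_on_subset[OF continuous_on_product_coordinates]) simp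

lemma closed_mono_cone: "closed (mono_cone N)"
proof -
  have "mono_cone N = (\<Inter>t\<in>{t. Suc t<N}. {x. x t \<le> x (Suc t)}) \<inter> (\<Inter>t\<in>{t. t\<ge>N}. {x. x t = 0})"
    unfolding mono_cone_def by auto
  also have "closed \<dots>"
    by (intro closed_Int closed_INT ballI closed_Collect_le closed_Collect_eq continuous_intros)
  finally show ?thesis .
qed

lemma mono_cone_mono:
  assumes "x \<in> mono_cone N" "i \<le> j" "j < N"
  shows "x i \<le> x j"
  using assms(2,3)
proof (induction j)
  case (Suc j)
  show ?case
  proof (cases "i = Suc j")
    case False
    then have "x i \<le> x j" using Suc by auto
    also have "x j \<le> x (Suc j)" using assms(1) Suc.prems unfolding mono_cone_def by auto
    finally show ?thesis .
  qed simp
qed simp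

definition is_projection :: "nat \<Rightarrow> (nat \<Rightarrow> real) \<Rightarrow> (nat \<Rightarrow> real) \<Rightarrow> bool" where
  "is_projection N y x \<longleftrightarrow> x \<in> mono_cone N \<and> (\<forall>z\<in>mono_cone N. sqdist N y x \<le> sqdist N y z)"

lemma sqdist_zero_le_far:
  assumes "i < N" "\<bar>z i\<bar> > sqrt (sqdist N y (\<lambda>_. 0)) + (\<Sum>i<N. \<bar>y i\<bar>)"
  shows "sqdist N y (\<lambda>_. 0) \<le> sqdist N y z"
proof -
  define Q where "Q = sqdist N y (\<lambda>_. 0)"
  have Q0: "Q \<ge> 0" unfolding Q_def sqdist_def by (intro sum_nonneg) auto
  have "\<bar>y i\<bar> \<le> (\<Sum>i<N. \<bar>y i\<bar>)" using assms(1) by (intro member_le_sum) auto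
  then have "sqrt Q \<le> \<bar>y i - z i\<bar>" using assms(2) unfolding Q_def by linarith
  then have "(sqrt Q)^2 \<le> \<bar>y i - z i\<bar>^2" using Q0 by (intro power_mono) auto
  then have "Q \<le> (y i - z i)^2" using Q0 by simp
  also have "\<dots> \<le> sqdist N y z" unfolding sqdist_def
    using assms(1) by (intro member_le_sum) auto
  finally show ?thesis unfolding Q_def .
qed

text \<open>A minimiser exists: minimise the continuous distance over the compact part of the cone
  inside a box; by coercivity nothing outside the box does better than the zero vector.\<close>

lemma projection_exists: "\<exists>x. is_projection N y x"
proof -
  define R where "R = sqrt (sqdist N y (\<lambda>_. 0)) + (\<Sum>i<N. \<bar>y i\<bar>)"
  define B where "B = PiE UNIV (\<lambda>i. if i < N then {-R..R} else {0::real})"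
  have "compactin (product_topology (\<lambda>i. euclidean) UNIV) B"
    unfolding B_def compactin_PiE by simp
  then have "compact B" by (simp add: euclidean_product_topology)
  then have compact_K: "compact (B \<inter> mono_cone N)" using closed_mono_cone by (rule compact_Int_closed)
  have "0 \<le> sqdist N y (\<lambda>_. 0)" unfolding sqdist_def by (intro sum_nonneg) auto
  then have "0 \<le> R" unfolding R_def by (intro add_nonneg_nonneg sum_nonneg) auto
  then have zero_in_K: "(\<lambda>_. 0) \<in> B \<inter> mono_cone N"
    unfolding B_def mono_cone_def by (auto simp: PiE_iff)
  have "continuous_on (B \<inter> mono_cone N) (sqdist N y)"
    unfolding sqdist_def by (intro continuous_intros)
  then obtain x where x: "x \<in> B \<inter> mono_cone N"
    and x_min: "\<And>z. z \<in> B \<inter> mono_cone N \<Longrightarrow> sqdist N y x \<le> sqdist N y z"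
    using continuous_attains_inf[OF compact_K] zero_in_K by blast
  have "sqdist N y x \<le> sqdist N y z" if z: "z \<in> mono_cone N" for z
  proof (cases "z \<in> B")
    case True
    then show ?thesis using x_min z by auto
  next
    case False
    then obtain i where "z i \<notin> (if i < N then {-R..R} else {0})"
      unfolding B_def by (auto simp: PiE_iff)
    moreover have "i \<ge> N \<Longrightarrow> z i = 0" using z unfolding mono_cone_def by auto
    ultimately have "i < N" "\<bar>z i\<bar> > R" by (auto split: if_splits)
    then have "sqdist N y (\<lambda>_. 0) \<le> sqdist N y z" unfolding R_def by (rule sqdist_zero_le_far)
    then show ?thesis using x_min[OF zero_in_K] by linarith
  qed
  then show ?thesis using x unfolding is_projection_def by blast
qed

text \<open>Parallelogram identity for the midpoint; it makes the squared distance strictly convex.\<close>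

lemma sqdist_midpoint:
  "sqdist N y (\<lambda>i. (x i + x' i)/2) = (sqdist N y x + sqdist N y x')/2 - (\<Sum>i<N. (x i - x' i)^2)/4"
proof -
  have "\<And>i. (y i - (x i + x' i)/2)^2 = (y i - x i)^2/2 + (y i - x' i)^2/2 - (x i - x' i)^2/4"
    by (simp add: power2_eq_square field_simps)
  then show ?thesis unfolding sqdist_def
    by (simp only: sum_subtractf sum_divide_distrib[symmetric] sum.distrib) simp
qed

text \<open>The nearest point is unique: the midpoint of two minimisers would be strictly closer.\<close>

lemma projection_unique:
  assumes "is_projection N y x" "is_projection N y x'"
  shows "x = x'"
proof
  fix j
  have cone: "x \<in> mono_cone N" "x' \<in> mono_cone N" using assms unfolding is_projection_def by auto
  then have "(\<lambda>i. (x i + x' i)/2) \<in> mono_cone N"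
    unfolding mono_cone_def by (auto intro!: divide_right_mono add_mono)
  then have "sqdist N y x \<le> sqdist N y x'" "sqdist N y x' \<le> sqdist N y x"
    "sqdist N y x \<le> sqdist N y (\<lambda>i. (x i + x' i)/2)" using assms cone unfolding is_projection_def by auto
  then have sum_sq: "(\<Sum>i<N. (x i - x' i)^2) \<le> 0" unfolding sqdist_midpoint by simp
  show "x j = x' j"
  proof (cases "j < N")
    case True
    have "(x j - x' j)^2 \<le> (\<Sum>i<N. (x i - x' i)^2)" using True by (intro member_le_sum) auto
    then have "(x j - x' j)^2 \<le> 0" using sum_sq by (rule order_trans)
    then show ?thesis by simp
  next
    case False
    then show ?thesis using cone unfolding mono_cone_def by auto
  qed
qed

lemma eta_mono_is_projection: "is_projection N y (eta_mono N y)"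
proof -
  obtain x where x: "is_projection N y x" using projection_exists by blast
  have "eta_mono N y = x" unfolding eta_mono_def
    by (rule the_equality) (use x projection_unique in \<open>auto simp: is_projection_def\<close>)
  then show ?thesis using x by simp
qed

lemma sqdist_shift:
  assumes "J \<subseteq> {..<N}"
  shows "sqdist N y (\<lambda>i. x i + (if i \<in> J then d else 0))
    = sqdist N y x - 2*d*(\<Sum>i\<in>J. y i - x i) + real (card J) * d^2"
proof -
  have "sqdist N y (\<lambda>i. x i + (if i \<in> J then d else 0))
      = (\<Sum>i<N. (y i - x i)^2 - (if i \<in> J then 2*d*(y i - x i) - d^2 else 0))"
    unfolding sqdist_def by (intro sum.cong) (auto simp: power2_eq_square algebra_simps)
  also have "\<dots> = sqdist N y x - (\<Sum>i\<in>J. 2*d*(y i - x i) - d^2)"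
    using assms unfolding sqdist_def by (simp add: sum_subtractf sum.If_cases Int_absorb1)
  also have "(\<Sum>i\<in>J. 2*d*(y i - x i) - d^2) = 2*d*(\<Sum>i\<in>J. y i - x i) - real (card J) * d^2"
    by (simp only: sum_subtractf sum_distrib_left[symmetric] sum_constant)
  finally show ?thesis by simp
qed

lemma projection_block_sum:
  assumes x: "is_projection N y x" and J: "J \<subseteq> {..<N}" and \<delta>: "\<delta> > 0"
    and shift: "\<And>d. \<bar>d\<bar> \<le> \<delta> \<Longrightarrow> (\<lambda>i. x i + (if i \<in> J then d else 0)) \<in> mono_cone N"
  shows "(\<Sum>i\<in>J. y i) = (\<Sum>i\<in>J. x i)"
proof (rule ccontr)
  define S where "S = (\<Sum>i\<in>J. y i - x i)"
  assume "(\<Sum>i\<in>J. y i) \<noteq> (\<Sum>i\<in>J. x i)"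
  then have S0: "S \<noteq> 0" unfolding S_def by (simp add: sum_subtractf)
  then have "J \<noteq> {}" unfolding S_def by auto
  moreover have "finite J" using J finite_subset by blast
  ultimately have card_J: "real (card J) \<ge> 1" by (simp add: card_gt_0_iff Suc_leI)
  define e where "e = min \<delta> (\<bar>S\<bar> / real (card J))"
  have e0: "e > 0" unfolding e_def using \<delta> S0 card_J by auto
  have e_card: "e * real (card J) \<le> \<bar>S\<bar>" unfolding e_def using card_J
    by (metis min.cobounded2 less_le_trans zero_less_one pos_le_divide_eq)
  define d where "d = sgn S * e"
  have "\<bar>d\<bar> = e" unfolding d_def using S0 e0 by (simp add: abs_mult)
  then have "\<bar>d\<bar> \<le> \<delta>" unfolding e_def by simp
  then have "sqdist N y x \<le> sqdist N y (\<lambda>i. x i + (if i \<in> J then d else 0))"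
    using x shift unfolding is_projection_def by auto
  also have "\<dots> = sqdist N y x - 2*d*S + real (card J) * d^2"
    unfolding S_def by (rule sqdist_shift[OF J])
  finally have "2*d*S \<le> real (card J) * d^2" by simp
  moreover have "d*S = e * \<bar>S\<bar>" "d^2 = e^2" unfolding d_def using S0
    by (auto simp: power2_eq_square abs_sgn mult.commute)
  ultimately have "2 * e * \<bar>S\<bar> \<le> real (card J) * e^2" by simp
  also have "\<dots> = e * (e * real (card J))" by (simp add: power2_eq_square)
  also have "\<dots> \<le> e * \<bar>S\<bar>" using e0 e_card by (intro mult_left_mono) auto
  finally show False using e0 S0 by simp
qed

lemma mono_cone_shift_interval:
  assumes x: "x \<in> mono_cone N" and ab: "a < b" "b \<le> N"
    and left: "0 < a \<Longrightarrow> x (a - 1) \<le> x a + d"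
    and right: "b < N \<Longrightarrow> x (b - 1) + d \<le> x b"
  shows "(\<lambda>i. x i + (if i \<in> {a..<b} then d else 0)) \<in> mono_cone N"
  unfolding mono_cone_def
proof (intro CollectI conjI allI impI)
  fix k assume k: "Suc k < N"
  have "x k \<le> x (Suc k)" using x k unfolding mono_cone_def by auto
  moreover have "Suc k = a \<Longrightarrow> x k \<le> x (Suc k) + d" using left by force
  moreover have "Suc k = b \<Longrightarrow> x k + d \<le> x (Suc k)" using right k by force
  ultimately show "x k + (if k \<in> {a..<b} then d else 0) \<le> x (Suc k) + (if Suc k \<in> {a..<b} then d else 0)"
    using ab by (cases "Suc k = a"; cases "Suc k = b") auto
next
  fix k assume "N \<le> k"
  then show "x k + (if k \<in> {a..<b} then d else 0) = 0" using x ab unfolding mono_cone_def by auto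
qed

text \<open>Upper min-max bound: x_t is at most the average of y over the suffix starting at the
  first index s where x reaches the level x_t.\<close>

lemma projection_le_suffix_avg:
  assumes x: "is_projection N y x" and t: "t < N"
  shows "\<exists>s\<le>t. x t \<le> block_avg {s..<N} y"
proof -
  have cone: "x \<in> mono_cone N" using x unfolding is_projection_def by auto
  define s where "s = (LEAST s. x t \<le> x s)"
  have st: "s \<le> t" unfolding s_def by (rule Least_le) simp
  have level: "x t \<le> x s" unfolding s_def by (rule LeastI[of _ t]) simp
  have jump: "x (s - 1) < x s" if "s > 0"
  proof -
    have "\<not> x t \<le> x (s - 1)" unfolding s_def
      by (rule not_less_Least) (use that in \<open>auto simp: s_def[symmetric]\<close>)
    then show ?thesis using level by simp
  qed
  define \<delta> where "\<delta> = (if s = 0 then 1 else x s - x (s - 1))"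
  have \<delta>_pos: "\<delta> > 0" unfolding \<delta>_def using jump by auto
  have sums: "(\<Sum>i\<in>{s..<N}. y i) = (\<Sum>i\<in>{s..<N}. x i)"
  proof (rule projection_block_sum[OF x _ \<delta>_pos])
    fix d :: real assume "\<bar>d\<bar> \<le> \<delta>"
    then show "(\<lambda>i. x i + (if i \<in> {s..<N} then d else 0)) \<in> mono_cone N"
      by (intro mono_cone_shift_interval[OF cone]) (use st t in \<open>auto simp: \<delta>_def\<close>)
  qed auto
  have "(\<Sum>i\<in>{s..<N}. x t) \<le> (\<Sum>i\<in>{s..<N}. x i)"
    using level mono_cone_mono[OF cone] by (intro sum_mono) (auto intro: order_trans)
  then have "real (N - s) * x t \<le> (\<Sum>i\<in>{s..<N}. y i)" using sums by simp
  then have "x t \<le> block_avg {s..<N} y" using st t unfolding block_avg_def by (simp add: field_simps)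
  then show ?thesis using st by blast
qed

text \<open>Lower min-max bound: x_t is at least the average of y over the prefix ending at the last
  index u where x is still at most x_t.\<close>

lemma projection_ge_prefix_avg:
  assumes x: "is_projection N y x" and t: "t < N"
  shows "\<exists>u. t \<le> u \<and> u < N \<and> block_avg {..u} y \<le> x t"
proof -
  have cone: "x \<in> mono_cone N" using x unfolding is_projection_def by auto
  define u where "u = (GREATEST u. u < N \<and> x u \<le> x t)"
  have "u < N \<and> x u \<le> x t" unfolding u_def by (rule GreatestI_nat[of _ t N]) (use t in auto)
  then have u: "u < N" "x u \<le> x t" by auto
  have tu: "t \<le> u" unfolding u_def by (rule Greatest_le_nat[of _ t N]) (use t in auto)
  have jump: "x u < x (Suc u)" if "Suc u < N"
  proof (rule ccontr)
    assume "\<not> x u < x (Suc u)"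
    then have "Suc u \<le> u" unfolding u_def
      using u that by (intro Greatest_le_nat[of _ _ N]) (auto simp: u_def[symmetric])
    then show False by simp
  qed
  define \<delta> where "\<delta> = (if Suc u < N then x (Suc u) - x u else 1)"
  have prefix: "{..u} = {0..<Suc u}" by auto
  have \<delta>_pos: "\<delta> > 0" unfolding \<delta>_def using jump by auto
  have sums: "(\<Sum>i\<in>{..u}. y i) = (\<Sum>i\<in>{..u}. x i)"
    unfolding prefix
  proof (rule projection_block_sum[OF x _ \<delta>_pos])
    fix d :: real assume "\<bar>d\<bar> \<le> \<delta>"
    then show "(\<lambda>i. x i + (if i \<in> {0..<Suc u} then d else 0)) \<in> mono_cone N"
      by (intro mono_cone_shift_interval[OF cone]) (use u in \<open>auto simp: \<delta>_def\<close>)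
  qed (use u in auto)
  have "(\<Sum>i\<in>{..u}. x i) \<le> (\<Sum>i\<in>{..u}. x t)"
    using u mono_cone_mono[OF cone] by (intro sum_mono) (fastforce intro: order_trans)
  then have "(\<Sum>i\<in>{..u}. y i) \<le> real (Suc u) * x t" using sums by simp
  then have "block_avg {..u} y \<le> x t" unfolding block_avg_def by (simp add: field_simps)
  then show ?thesis using tu u by blast
qed

section \<open>A pointwise bound and its expectation\<close>

text \<open>The sum of the 2p-th powers of all block averages that can bound coordinate t.\<close>

definition avg_power_sum :: "nat \<Rightarrow> nat \<Rightarrow> nat \<Rightarrow> (nat \<Rightarrow> real) \<Rightarrow> real" where
  "avg_power_sum N p t y =
     (\<Sum>s\<in>{..t}. block_avg {s..<N} y ^ (2*p)) + (\<Sum>u\<in>{t..<N}. block_avg {..u} y ^ (2*p))"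

definition moment_sum :: "nat \<Rightarrow> nat \<Rightarrow> nat \<Rightarrow> real" where
  "moment_sum N p t =
     (\<Sum>s\<in>{..t}. normal_moment p / real (N - s) ^ p) + (\<Sum>u\<in>{t..<N}. normal_moment p / real (Suc u) ^ p)"

text \<open>Pointwise consequence of the min-max bounds: (x_t^2)^p is dominated by one of the
  block-average powers and hence by their sum.\<close>

lemma projection_power_le_avg_power_sum:
  assumes t: "t < N"
  shows "(eta_mono N y t ^ 2) ^ p \<le> avg_power_sum N p t y"
proof -
  let ?x = "eta_mono N y"
  have nonneg: "0 \<le> (\<Sum>s\<in>{..t}. block_avg {s..<N} y ^ (2*p))" "0 \<le> (\<Sum>u\<in>{t..<N}. block_avg {..u} y ^ (2*p))"
    by (simp_all add: sum_nonneg power_mult)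
  have "\<exists>a. ?x t ^ 2 \<le> a ^ 2 \<and> a ^ (2*p) \<le> avg_power_sum N p t y"
  proof (cases "?x t \<ge> 0")
    case True
    obtain s where s: "s \<le> t" "?x t \<le> block_avg {s..<N} y"
      using projection_le_suffix_avg[OF eta_mono_is_projection t] by blast
    have "?x t ^ 2 \<le> block_avg {s..<N} y ^ 2" using True s(2) by (intro power_mono) auto
    moreover have "block_avg {s..<N} y ^ (2*p) \<le> (\<Sum>s\<in>{..t}. block_avg {s..<N} y ^ (2*p))"
      using s(1) by (intro member_le_sum) (auto simp: power_mult)
    ultimately show ?thesis using nonneg unfolding avg_power_sum_def
      by (intro exI[of _ "block_avg {s..<N} y"] conjI) linarith+
  next
    case False
    obtain u where u: "t \<le> u" "u < N" "block_avg {..u} y \<le> ?x t"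
      using projection_ge_prefix_avg[OF eta_mono_is_projection t] by blast
    have "?x t ^ 2 \<le> block_avg {..u} y ^ 2"
      unfolding abs_le_square_iff[symmetric] using False u(3) by auto
    moreover have "block_avg {..u} y ^ (2*p) \<le> (\<Sum>u\<in>{t..<N}. block_avg {..u} y ^ (2*p))"
      using u by (intro member_le_sum) (auto simp: power_mult)
    ultimately show ?thesis using nonneg unfolding avg_power_sum_def
      by (intro exI[of _ "block_avg {..u} y"] conjI) linarith+
  qed
  then obtain a where a: "?x t ^ 2 \<le> a ^ 2" "a ^ (2*p) \<le> avg_power_sum N p t y" by blast
  have "(?x t ^ 2) ^ p \<le> (a ^ 2) ^ p" using a(1) by (rule power_mono) simp
  also have "\<dots> = a ^ (2*p)" by (simp add: power_mult)
  finally show ?thesis using a(2) by linarith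
qed

lemma avg_power_sum_expectation:
  assumes t: "t < N"
  shows "integrable (gauss N) (avg_power_sum N p t)"
    and "(\<integral>z. avg_power_sum N p t z \<partial>gauss N) = moment_sum N p t"
proof -
  have suffix: "{s..<N} \<subseteq> {..<N}" "{s..<N} \<noteq> {}" if "s \<in> {..t}" for s using that t by auto
  have prefix: "{..u} \<subseteq> {..<N}" "{..u} \<noteq> {}" if "u \<in> {t..<N}" for u using that by auto
  note suffix_moment = block_avg_moment[OF suffix] and prefix_moment = block_avg_moment[OF prefix]
  have int_suffix: "integrable (gauss N) (\<lambda>z. \<Sum>s\<in>{..t}. block_avg {s..<N} z ^ (2*p))"
    and int_prefix: "integrable (gauss N) (\<lambda>z. \<Sum>u\<in>{t..<N}. block_avg {..u} z ^ (2*p))"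
    using suffix_moment(1) prefix_moment(1) by (intro Bochner_Integration.integrable_sum; auto)+
  then show "integrable (gauss N) (avg_power_sum N p t)"
    unfolding avg_power_sum_def by (intro Bochner_Integration.integrable_add)
  have "(\<integral>z. (\<Sum>s\<in>{..t}. block_avg {s..<N} z ^ (2*p)) \<partial>gauss N) = (\<Sum>s\<in>{..t}. normal_moment p / real (N - s) ^ p)"
    using suffix_moment by (subst Bochner_Integration.integral_sum) auto
  moreover have "(\<integral>z. (\<Sum>u\<in>{t..<N}. block_avg {..u} z ^ (2*p)) \<partial>gauss N) = (\<Sum>u\<in>{t..<N}. normal_moment p / real (Suc u) ^ p)"
    using prefix_moment by (subst Bochner_Integration.integral_sum) auto
  ultimately show "(\<integral>z. avg_power_sum N p t z \<partial>gauss N) = moment_sum N p t"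
    unfolding avg_power_sum_def moment_sum_def using int_suffix int_prefix by simp
qed

text \<open>Young's inequality in tangent-line form: a <= (1 - 1/p) c + a^p / (p c^(p-1)) for a, c > 0,
  an instance of Bernoulli's inequality; it turns the p-th power bound into a bound on a.\<close>

lemma young_tangent:
  fixes a c :: real
  assumes "a \<ge> 0" "c > 0" "p \<ge> 1"
  shows "a \<le> (1 - 1/real p) * c + a^p / (real p * c^(p-1))"
proof -
  define r where "r = a / c"
  have r0: "r \<ge> 0" unfolding r_def using assms by auto
  have "1 + real p * (r - 1) \<le> (1 + (r - 1))^p" by (rule Bernoulli_inequality) (use r0 in auto)
  then have bernoulli: "c * (1 + real p * (r - 1)) \<le> c * r^p" using assms by (intro mult_left_mono) auto
  have a: "a = c * r" unfolding r_def using assms by simp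
  have cp: "c^p = c * c^(p-1)" using assms(3) by (cases p) auto
  have "a^p / (real p * c^(p-1)) = c * r^p / real p"
    using assms cp unfolding a by (simp add: field_simps)
  moreover have "c * (1 + real p * (r - 1)) / real p \<le> c * r^p / real p"
    using bernoulli by (rule divide_right_mono) simp
  moreover have "c * (1 + real p * (r - 1)) / real p = c / real p + c * r - c"
    using assms by (simp add: field_simps)
  moreover have "(1 - 1/real p) * c = c - c / real p" by (simp add: algebra_simps)
  ultimately show ?thesis unfolding a by linarith
qed

lemma risk_le_moment_sums:
  assumes p: "p \<ge> 1" and c: "\<And>t. c t > 0"
  shows "risk N \<le> (\<Sum>t<N. (1 - 1/real p) * c t + moment_sum N p t / (real p * c t ^ (p-1)))"
proof -
  interpret prob_space "gauss N" by (rule prob_space_gauss)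
  define g where "g z = (\<Sum>t<N. (1 - 1/real p) * c t + avg_power_sum N p t z / (real p * c t ^ (p-1)))" for z
  have int_g: "integrable (gauss N) g"
    unfolding g_def using avg_power_sum_expectation(1)
    by (intro Bochner_Integration.integrable_sum Bochner_Integration.integrable_add
        integrable_const integrable_divide_zero) auto
  have integral_g: "(\<integral>z. g z \<partial>gauss N) = (\<Sum>t<N. (1 - 1/real p) * c t + moment_sum N p t / (real p * c t ^ (p-1)))"
    unfolding g_def using avg_power_sum_expectation
    by (subst Bochner_Integration.integral_sum) (auto simp: prob_space)
  have pointwise: "(\<Sum>i<N. (eta_mono N z i)^2) \<le> g z" for z
    unfolding g_def
  proof (intro sum_mono)
    fix t assume "t \<in> {..<N}"
    have denom: "0 \<le> real p * c t ^ (p-1)" using c[of t] by simp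
    have "eta_mono N z t ^ 2 \<le> (1 - 1/real p) * c t + (eta_mono N z t ^ 2)^p / (real p * c t ^ (p-1))"
      by (rule young_tangent) (use c p in auto)
    also have "\<dots> \<le> (1 - 1/real p) * c t + avg_power_sum N p t z / (real p * c t ^ (p-1))"
      using projection_power_le_avg_power_sum[of t N z p] \<open>t \<in> {..<N}\<close> denom
      by (intro add_left_mono divide_right_mono) auto
    finally show "eta_mono N z t ^ 2 \<le> \<dots>" .
  qed
  show ?thesis
  proof (cases "integrable (gauss N) (\<lambda>z. \<Sum>i<N. (eta_mono N z i)^2)")
    case True
    then show ?thesis unfolding risk_def integral_g[symmetric] by (rule integral_mono[OF _ int_g pointwise])
  next
    case False
    then have "risk N = 0" unfolding risk_def by (rule not_integrable_integral_eq)
    also have "0 \<le> (\<integral>z. g z \<partial>gauss N)"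
    proof (rule Bochner_Integration.integral_nonneg)
      fix z
      have "0 \<le> (\<Sum>i<N. (eta_mono N z i)^2)" by (intro sum_nonneg) auto
      then show "0 \<le> g z" using pointwise[of z] by linarith
    qed
    finally show ?thesis unfolding integral_g .
  qed
qed

section \<open>Elementary estimates\<close>

text \<open>(2k-1)!! <= k^k, by induction using (1 + 1/k)^k >= 2.\<close>

lemma normal_moment_le: "normal_moment k \<le> real k ^ k"
proof (induction k)
  case 0
  then show ?case by (simp add: normal_moment_def)
next
  case (Suc k)
  have num: "fact (2 * Suc k) = (2 * (real k + 1)) * ((2 * real k + 1) * (fact (2*k) :: real))"
    and den: "(2::real)^(Suc k) * fact (Suc k) = (2 * (real k + 1)) * (2^k * fact k)"
    by (simp_all add: algebra_simps)
  have recursion: "normal_moment (Suc k) = normal_moment k * (2 * real k + 1)"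
    unfolding normal_moment_def num den
    by (subst nonzero_mult_divide_mult_cancel_left) simp_all
  have growth: "(2 * real k + 1) * real k ^ k \<le> real (Suc k) ^ Suc k"
  proof (cases "k = 0")
    case False
    then have kp: "real k > 0" by simp
    have "1 + real k * (1 / real k) \<le> (1 + 1 / real k) ^ k"
      by (rule Bernoulli_inequality) (rule order_trans[of _ 0], simp_all)
    also have "(1 + 1 / real k) ^ k = real (Suc k) ^ k / real k ^ k"
      using kp by (simp add: field_simps)
    finally have "2 * real k ^ k \<le> real (Suc k) ^ k" using kp by (simp add: field_simps)
    then have "(real k + 1) * (2 * real k ^ k) \<le> (real k + 1) * real (Suc k) ^ k"
      by (intro mult_left_mono) auto
    then have "(2 * real k + 2) * real k ^ k \<le> real (Suc k) ^ Suc k" by (simp add: algebra_simps)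
    moreover have "(2 * real k + 1) * real k ^ k \<le> (2 * real k + 2) * real k ^ k"
      by (intro mult_right_mono) auto
    ultimately show ?thesis by linarith
  qed simp
  have "normal_moment (Suc k) \<le> real k ^ k * (2 * real k + 1)"
    unfolding recursion using Suc.IH by (intro mult_right_mono) auto
  also have "\<dots> \<le> real (Suc k) ^ Suc k" using growth by (simp add: mult.commute)
  finally show ?case .
qed

text \<open>Telescoping bound 1/m^2 <= 2/m - 2/(m+1) summed over m = a+1, ..., b.\<close>

lemma inverse_square_tail:
  "a \<le> b \<Longrightarrow> (\<Sum>k\<in>{a..<b}. 1 / real (Suc k)^2) \<le> 2 / real (Suc a) - 2 / real (Suc b)"
proof (induction b)
  case (Suc b)
  show ?case
  proof (cases "a = Suc b")
    case False
    then have ab: "a \<le> b" using Suc.prems by simp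
    define m where "m = real (Suc b)"
    have m1: "m \<ge> 1" unfolding m_def by simp
    have "m * (m + 1) \<le> 2 * (m * m)" using m1 by (simp add: algebra_simps)
    then have "1 / m ^ 2 \<le> 2 / m - 2 / (m + 1)" using m1
      by (simp add: divide_simps power2_eq_square)
    then have "1 / real (Suc b)^2 \<le> 2 / real (Suc b) - 2 / real (Suc (Suc b))"
      unfolding m_def by (simp add: add.commute)
    then show ?thesis using Suc.IH ab by simp
  qed simp
qed simp

lemma inverse_power_tail:
  assumes "p \<ge> 2"
  shows "(\<Sum>u\<in>{t..<N}. 1 / real (Suc u)^p) \<le> 2 / real (Suc t)^(p-1)"
proof (cases "t \<le> N")
  case True
  have "(\<Sum>u\<in>{t..<N}. 1 / real (Suc u)^p) \<le> (\<Sum>u\<in>{t..<N}. (1 / real (Suc t)^(p-2)) * (1 / real (Suc u)^2))"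
  proof (intro sum_mono)
    fix u assume "u \<in> {t..<N}"
    then have "real (Suc t)^(p-2) * real (Suc u)^2 \<le> real (Suc u)^(p-2) * real (Suc u)^2"
      by (intro mult_right_mono power_mono) auto
    also have "\<dots> = real (Suc u)^p" using assms by (metis le_add_diff_inverse2 power_add)
    finally show "1 / real (Suc u)^p \<le> (1 / real (Suc t)^(p-2)) * (1 / real (Suc u)^2)"
      by (simp add: divide_simps)
  qed
  also have "\<dots> = (1 / real (Suc t)^(p-2)) * (\<Sum>u\<in>{t..<N}. 1 / real (Suc u)^2)"
    by (simp add: sum_distrib_left)
  also have "\<dots> \<le> (1 / real (Suc t)^(p-2)) * (2 / real (Suc t))"
  proof (intro mult_left_mono)
    show "(\<Sum>u\<in>{t..<N}. 1 / real (Suc u)^2) \<le> 2 / real (Suc t)"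
      using inverse_square_tail[OF True] by (rule order_trans) simp
  qed simp
  also have "\<dots> = 2 / real (Suc t)^(p-1)"
  proof -
    have "p - 1 = Suc (p - 2)" using assms by simp
    then show ?thesis by (simp add: power_Suc2)
  qed
  finally show ?thesis .
qed simp

text \<open>The same bound for the head sum sum_{s <= t} (N-s)^(-p), obtained by reflection.\<close>

lemma inverse_power_head:
  assumes "t < N" "p \<ge> 2"
  shows "(\<Sum>s\<in>{..t}. 1 / real (N - s)^p) \<le> 2 / real (N - t)^(p-1)"
proof -
  have "(\<Sum>s\<in>{..t}. 1 / real (N - s)^p) = (\<Sum>u\<in>{N - Suc t..<N}. 1 / real (Suc u)^p)"
    by (rule sum.reindex_bij_witness[of _ "\<lambda>u. N - Suc u" "\<lambda>s. N - Suc s"]) (use assms in auto)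
  also have "\<dots> \<le> 2 / real (Suc (N - Suc t))^(p-1)" by (rule inverse_power_tail[OF assms(2)])
  also have "Suc (N - Suc t) = N - t" using assms by simp
  finally show ?thesis .
qed

lemma power_superadditive:
  fixes a b :: real
  assumes "a \<ge> 0" "b \<ge> 0" "p \<ge> 1"
  shows "a^p + b^p \<le> (a + b)^p"
proof -
  obtain k where k: "p = Suc k" using assms(3) by (cases p) auto
  have "a^p + b^p = a * a^k + b * b^k" unfolding k by simp
  also have "\<dots> \<le> a * (a+b)^k + b * (a+b)^k"
    using assms by (intro add_mono mult_left_mono power_mono) auto
  also have "\<dots> = (a+b)^p" unfolding k by (simp add: algebra_simps)
  finally show ?thesis .
qed

text \<open>Integral comparison for a decreasing power: sum_{K=1}^N K^(q-1) <= N^q / q, by the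
  mean value theorem applied to z^q on each [K-1, K].\<close>

lemma sum_powr_le:
  fixes q :: real
  assumes q: "0 < q" "q \<le> 1"
  shows "(\<Sum>K\<in>{1..N}. real K powr (q - 1)) \<le> real N powr q / q"
proof (induction N)
  case (Suc N)
  have step: "real (Suc N) powr (q - 1) \<le> (real (Suc N) powr q - real N powr q) / q"
  proof (cases "N = 0")
    case False
    have "\<And>x. real N \<le> x \<Longrightarrow> x \<le> real (Suc N) \<Longrightarrow> ((\<lambda>z. z powr q) has_real_derivative q * x powr (q - 1)) (at x)"
      using False by (intro has_real_derivative_powr) auto
    then obtain z where z: "real N < z" "z < real (Suc N)"
      "real (Suc N) powr q - real N powr q = (real (Suc N) - real N) * (q * z powr (q - 1))"
      using MVT2[of "real N" "real (Suc N)" "\<lambda>z. z powr q" "\<lambda>x. q * x powr (q - 1)"] by auto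
    have "real (Suc N) powr (q - 1) \<le> z powr (q - 1)"
      using z q False by (intro powr_mono2') auto
    then show ?thesis using z q by (simp add: field_simps)
  qed (use q in simp)
  have "(\<Sum>K\<in>{1..Suc N}. real K powr (q - 1)) = (\<Sum>K\<in>{1..N}. real K powr (q - 1)) + real (Suc N) powr (q - 1)"
    by simp
  also have "\<dots> \<le> real N powr q / q + (real (Suc N) powr q - real N powr q) / q"
    using Suc.IH step by (rule add_mono)
  also have "\<dots> = real (Suc N) powr q / q" by (simp add: add_divide_distrib[symmetric])
  finally show ?case .
qed simp

lemma sum_of_head_sums: "(\<Sum>t<N. \<Sum>s\<in>{..t}. f s) = (\<Sum>s<N. real (N - s) * f s :: real)"
proof (induction N)
  case (Suc N)
  have "(\<Sum>s<Suc N. real (Suc N - s) * f s) = (\<Sum>s<Suc N. real (N - s) * f s + f s)"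
    by (intro sum.cong) (auto simp: Suc_diff_le algebra_simps)
  also have "\<dots> = (\<Sum>s<N. real (N - s) * f s) + (\<Sum>s\<in>{..N}. f s)"
    by (simp add: sum.distrib lessThan_Suc_atMost[symmetric])
  finally show ?case using Suc.IH by simp
qed simp

lemma sum_of_tail_sums: "(\<Sum>t<N. \<Sum>u\<in>{t..<N}. g u) = (\<Sum>u<N. real (Suc u) * g u :: real)"
proof (induction N)
  case (Suc N)
  have "(\<Sum>t<Suc N. \<Sum>u\<in>{t..<Suc N}. g u) = (\<Sum>t<N. (\<Sum>u\<in>{t..<N}. g u) + g N) + g N"
    by (simp add: sum.atLeastLessThan_Suc)
  also have "\<dots> = (\<Sum>t<N. \<Sum>u\<in>{t..<N}. g u) + real (Suc N) * g N"
    by (simp add: sum.distrib algebra_simps)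
  finally show ?case using Suc.IH by simp
qed simp

section \<open>The risk bounds\<close>

text \<open>For N = 1 the cone is unconstrained, so the projection is the identity and the risk is E Z^2.\<close>

lemma risk_one: "risk 1 = 1"
proof -
  have "is_projection 1 z (\<lambda>i. if i = 0 then z 0 else 0)" for z
    unfolding is_projection_def mono_cone_def by (auto simp: sqdist_def)
  then have eta: "eta_mono 1 z = (\<lambda>i. if i = 0 then z 0 else 0)" for z
    using projection_unique eta_mono_is_projection by blast
  have "risk 1 = (\<integral>z. block_avg {0} z ^ (2*1) \<partial>gauss 1)"
    unfolding risk_def eta by (simp add: block_avg_def)
  also have "\<dots> = 1" by (subst block_avg_moment(2)) (auto simp: normal_moment_def)
  finally show ?thesis .
qed

text \<open>The linear bound (p = 1, c = 1): every block average contributes its variance.\<close>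

lemma risk_le_linear: "risk N \<le> 2 * real N"
proof -
  have "risk N \<le> (\<Sum>t<N. moment_sum N 1 t)"
    using risk_le_moment_sums[of 1 "\<lambda>_. 1" N] by simp
  also have "\<dots> = (\<Sum>t<N. \<Sum>s\<in>{..t}. 1 / real (N - s)) + (\<Sum>t<N. \<Sum>u\<in>{t..<N}. 1 / real (Suc u))"
    by (simp add: moment_sum_def normal_moment_def sum.distrib)
  also have "\<dots> = 2 * real N"
    unfolding sum_of_head_sums sum_of_tail_sums by simp
  finally show ?thesis .
qed

lemma moment_sum_le_weight_power:
  assumes t: "t < N" and p: "p \<ge> 2"
  defines "w \<equiv> \<lambda>K::nat. real K powr (1 / real p - 1)"
  shows "moment_sum N p t \<le> (real p * 2 powr (1 / real p) * (w (N - t) + w (Suc t))) ^ p"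
proof -
  have w_power: "w K ^ p = 1 / real K^(p-1)" if "K \<ge> 1" for K
  proof -
    have "w K ^ p = real K powr (real p * (1 / real p - 1))"
      unfolding w_def using that by (simp add: powr_power)
    also have "real p * (1 / real p - 1) = - real (p - 1)" using p by (simp add: field_simps)
    finally show ?thesis using that by (simp add: powr_minus powr_realpow divide_inverse)
  qed
  have two_power: "(2 powr (1 / real p)) ^ p = (2::real)"
    using p by (simp add: powr_power)
  have moment_nonneg: "0 \<le> normal_moment p" by (simp add: normal_moment_def)
  have "moment_sum N p t
      = normal_moment p * ((\<Sum>s\<in>{..t}. 1 / real (N - s) ^ p) + (\<Sum>u\<in>{t..<N}. 1 / real (Suc u) ^ p))"
    unfolding moment_sum_def by (simp add: sum_distrib_left algebra_simps)
  also have "\<dots> \<le> real p ^ p * (2 / real (N - t)^(p-1) + 2 / real (Suc t)^(p-1))"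
    using inverse_power_head[OF t p] inverse_power_tail[OF p] normal_moment_le[of p] moment_nonneg
    by (intro mult_mono add_mono) (auto intro!: add_nonneg_nonneg sum_nonneg)
  also have "\<dots> = real p ^ p * 2 * (w (N - t) ^ p + w (Suc t) ^ p)"
    using t w_power[of "N - t"] w_power[of "Suc t"] by (simp add: ring_distribs)
  also have "\<dots> = (real p * 2 powr (1 / real p))^p * (w (N - t) ^ p + w (Suc t) ^ p)"
    by (simp add: power_mult_distrib two_power)
  also have "\<dots> \<le> (real p * 2 powr (1 / real p))^p * (w (N - t) + w (Suc t)) ^ p"
    using p by (intro mult_left_mono power_superadditive) (auto simp: w_def)
  finally show ?thesis by (simp add: power_mult_distrib)
qed

lemma risk_le_root_bound:
  assumes p: "p \<ge> 2"
  shows "risk N \<le> 2 * real p ^ 2 * (2 powr (1 / real p) * real N powr (1 / real p))"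
proof -
  define q where "q = 1 / real p"
  define w where "w K = real K powr (q - 1)" for K :: nat
  define c where "c t = real p * 2 powr q * (w (N - t) + w (Suc t))" for t
  have c_pos: "c t > 0" for t unfolding c_def w_def using p by (intro mult_pos_pos add_nonneg_pos) auto
  have tangent: "(1 - 1/real p) * c t + moment_sum N p t / (real p * c t ^ (p-1)) \<le> c t" if "t < N" for t
  proof -
    have c_power: "c t ^ p = c t * c t ^ (p - 1)" using p by (cases p) auto
    have "moment_sum N p t \<le> c t ^ p"
      using moment_sum_le_weight_power[OF that p] unfolding c_def w_def q_def .
    then have "moment_sum N p t / (real p * c t ^ (p-1)) \<le> c t / real p"
      using c_pos[of t] p unfolding c_power by (simp add: divide_simps mult.commute)
    then show ?thesis by (simp add: algebra_simps)
  qed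
  have head_eq_tail: "(\<Sum>t<N. w (N - t)) = (\<Sum>t<N. w (Suc t))"
    by (rule sum.reindex_bij_witness[of _ "\<lambda>t. N - Suc t" "\<lambda>t. N - Suc t"]) (auto simp: Suc_diff_Suc)
  have "risk N \<le> (\<Sum>t<N. (1 - 1/real p) * c t + moment_sum N p t / (real p * c t ^ (p-1)))"
    using p c_pos by (intro risk_le_moment_sums) auto
  also have "\<dots> \<le> (\<Sum>t<N. c t)" by (intro sum_mono tangent) auto
  also have "\<dots> = real p * 2 powr q * (2 * (\<Sum>K\<in>{1..N}. real K powr (q - 1)))"
    unfolding c_def sum_distrib_left[symmetric] sum.distrib head_eq_tail
    by (simp add: w_def sum.atLeast1_atMost_eq)
  also have "\<dots> \<le> real p * 2 powr q * (2 * (real N powr q / q))"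
    using p unfolding q_def by (intro mult_left_mono sum_powr_le) auto
  also have "\<dots> = 2 * real p ^ 2 * (2 powr q * real N powr q)"
    unfolding q_def using p by (simp add: power2_eq_square field_simps)
  finally show ?thesis unfolding q_def .
qed

text \<open>With p = floor (ln N) >= 2 both roots are bounded: 2^(1/p) <= 3/2 and N^(1/p) <= e^(3/2) <= 21/4.\<close>

lemma risk_le_log_squared:
  assumes N: "N \<ge> 10"
  shows "risk N \<le> 20 * (ln (real N))^2"
proof -
  define L where "L = ln (real N)"
  have "exp (2::real) \<le> 3 * 3" unfolding exp_add[of 1 1, simplified] using exp_le by (intro mult_mono) auto
  then have L2: "2 \<le> L" unfolding L_def using N by (subst ln_ge_iff) auto
  define p where "p = nat \<lfloor>L\<rfloor>"
  have p: "p \<ge> 2" "real p \<le> L" "L < real p + 1" unfolding p_def using L2 by linarith+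
  have root_two: "2 powr (1 / real p) \<le> (3/2 :: real)"
  proof -
    have "(2::real) powr (1 / real p) \<le> 2 powr (1/2)" using p by (intro powr_mono) auto
    also have "\<dots> \<le> sqrt (9/4)" by (simp add: powr_half_sqrt)
    finally show ?thesis by (simp add: real_sqrt_divide)
  qed
  have root_N: "real N powr (1 / real p) \<le> 21/4"
  proof -
    have "L / real p \<le> (real p + 1) / real p" using p by (intro divide_right_mono) auto
    also have "\<dots> \<le> 3/2" using p by (simp add: field_simps)
    finally have "real N powr (1 / real p) \<le> exp (1 + 1/2)" unfolding L_def using N by (simp add: powr_def)
    also have "exp (1/2 :: real) = sqrt (exp 1)"
      by (rule real_sqrt_unique[symmetric]) (auto simp: power2_eq_square simp flip: exp_add)
    then have "exp (1 + 1/2 :: real) = exp 1 * sqrt (exp 1)"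
      by (simp only: exp_add)
    also have "\<dots> \<le> 3 * sqrt ((7/4)^2)" using exp_le by (intro mult_mono real_sqrt_le_mono) (auto simp: power2_eq_square)
    finally show ?thesis by simp
  qed
  have "risk N \<le> 2 * real p ^ 2 * (2 powr (1 / real p) * real N powr (1 / real p))"
    using risk_le_root_bound[OF p(1)] .
  also have "\<dots> \<le> 2 * L ^ 2 * (3/2 * (21/4))"
    using p root_two root_N by (intro mult_mono power_mono) auto
  also have "\<dots> \<le> 20 * L^2" by simp
  finally show ?thesis unfolding L_def .
qed

theorem mainTheorem10:
  shows "risk 1 = 1 \<and> (\<forall>N::nat. N \<ge> 10 \<longrightarrow> risk N \<le> 20 * (ln (real N))^2)
    \<and> (\<forall>N::nat. N \<ge> 1 \<longrightarrow> risk N < 2 * real N * (ln (real N) + 1))"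
proof (intro conjI allI impI)
  show "risk 1 = 1" by (rule risk_one)
  show "risk N \<le> 20 * (ln (real N))^2" if "N \<ge> 10" for N using that by (rule risk_le_log_squared)
  show "risk N < 2 * real N * (ln (real N) + 1)" if N: "N \<ge> 1" for N
  proof (cases "N = 1")
    case True
    then show ?thesis using risk_one by simp
  next
    case False
    then have "0 < 2 * real N * ln (real N)" using N by simp
    then show ?thesis using risk_le_linear[of N] by (simp add: ring_distribs)
  qed
qed

end
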